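(* For every $d\ge1$, the maximum of the index $[D_{2d}:L]$, over all sublattices $L$ of $D_{2d}$ generated by $2d$ linearly independent roots of $D_{2d}$, equals $2^{d-1}$.
   Context: $D_n=\{x\in\mathbb Z^n:\sum_ix_i\equiv0\pmod2\}$ with the standard inner product; its roots are its vectors of squared length $2$, i.e. $\pm b_i\pm b_j$ ($i\ne j$) for the standard basis $b_1,\dots,b_n$. *)

theory Defs
  imports Complex_Main
begin

text \<open>Vectors of Z^n are modelled as functions nat => int vanishing outside {0..<n}.\<close>

definition Dn :: "nat \<Rightarrow> (nat \<Rightarrow> int) set" where
  "Dn n = {x. (\<forall>i\<ge>n. x i = 0) \<and> even (\<Sum>i<n. x i)}"

definition Dn_roots :: "nat \<Rightarrow> (nat \<Rightarrow> int) set" where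
  "Dn_roots n = {x \<in> Dn n. (\<Sum>i<n. (x i)^2) = 2}"

definition int_span :: "nat \<Rightarrow> (nat \<Rightarrow> nat \<Rightarrow> int) \<Rightarrow> (nat \<Rightarrow> int) set" where
  "int_span m r = {(\<lambda>j. \<Sum>i<m. c i * r i j) | c :: nat \<Rightarrow> int. True}"

definition lin_indep :: "nat \<Rightarrow> (nat \<Rightarrow> nat \<Rightarrow> int) \<Rightarrow> bool" where
  "lin_indep m r \<longleftrightarrow> (\<forall>c :: nat \<Rightarrow> real.
      (\<forall>j. (\<Sum>i<m. c i * real_of_int (r i j)) = 0) \<longrightarrow> (\<forall>i<m. c i = 0))"

text \<open>Group index [M : L]: number of cosets of L in M (0 if infinite).\<close>
definition lattice_index :: "(nat \<Rightarrow> int) set \<Rightarrow> (nat \<Rightarrow> int) set \<Rightarrow> nat" where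
  "lattice_index M L = card ((\<lambda>x. {(\<lambda>j. x j + y j) | y. y \<in> L}) ` M)"

end

theory Submission
  imports Defs "HOL-Library.Function_Algebras" "HOL-Library.Indicator_Function"
begin

text \<open>Linearly independent roots +-e_a +-e_b of full rank n form a signed graph on the coordinates
  with n edges, and independence forces every vertex to carry an edge. Eliminating vertices one at
  a time -- a vertex of degree one together with its edge; a vertex of degree two with edges to
  distinct b, c, whose combination is a root on {b, c}; a vertex whose two edges both go to b,
  whose combination is 2 e_b, together with b -- shows that every integer vector is congruent
  modulo the sublattice to the indicator vector of a subset of a fixed set A of at most n/2
  coordinates. Such an indicator lies in D_n only for subsets of even size, so the index is at most
  2^(|A|-1) <= 2^(d-1). Conversely, for the roots e_2k +- e_(2k+1) every lattice vector has even
  coordinate sum on each pair {2k, 2k+1}, so the sums of e_2k over the even subsets of {0..<d} lie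
  in distinct cosets.\<close>

definition supported_on :: "nat set \<Rightarrow> (nat \<Rightarrow> int) \<Rightarrow> bool" where
  "supported_on V x \<longleftrightarrow> (\<forall>j. j \<notin> V \<longrightarrow> x j = 0)"

definition lattice_of :: "(nat \<Rightarrow> int) set \<Rightarrow> (nat \<Rightarrow> int) set" where
  "lattice_of R = {x. \<exists>c. x = (\<lambda>j. \<Sum>v\<in>R. c v * v j)}"

definition lin_indep_set :: "(nat \<Rightarrow> int) set \<Rightarrow> bool" where
  "lin_indep_set R \<longleftrightarrow>
     (\<forall>c :: (nat \<Rightarrow> int) \<Rightarrow> real. (\<forall>j. (\<Sum>v\<in>R. c v * of_int (v j)) = 0) \<longrightarrow> (\<forall>v\<in>R. c v = 0))"

lemma sum_fun_apply: "(\<Sum>v\<in>A. f v) j = (\<Sum>v\<in>A. f v j :: 'b::comm_monoid_add)"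
  by (induction A rule: infinite_finite_induct) auto

lemma sum_two_points:
  assumes "finite A" "a \<in> A" "b \<in> A" "a \<noteq> b" "\<And>x. x \<in> A \<Longrightarrow> x \<noteq> a \<Longrightarrow> x \<noteq> b \<Longrightarrow> f x = 0"
  shows "sum f A = f a + f b"
proof -
  have "sum f A = sum f {a, b}"
    by (rule sum.mono_neutral_right) (use assms in auto)
  then show ?thesis using assms(4) by simp
qed

lemma lattice_ofI: "x = (\<lambda>j. \<Sum>v\<in>R. c v * v j) \<Longrightarrow> x \<in> lattice_of R"
  unfolding lattice_of_def by blast

lemma lattice_of_zero: "0 \<in> lattice_of R"
  unfolding lattice_of_def by (rule CollectI, rule exI[of _ "\<lambda>v. 0"]) (simp add: zero_fun_def)

lemma lattice_of_add: "x \<in> lattice_of R \<Longrightarrow> y \<in> lattice_of R \<Longrightarrow> x + y \<in> lattice_of R"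
  unfolding lattice_of_def
  by (clarify, rename_tac c c', rule_tac x = "\<lambda>v. c v + c' v" in exI)
     (simp add: fun_eq_iff sum.distrib algebra_simps)

lemma lattice_of_scale: "x \<in> lattice_of R \<Longrightarrow> (\<lambda>j. k * x j) \<in> lattice_of R"
  unfolding lattice_of_def
  by (clarify, rename_tac c, rule_tac x = "\<lambda>v. k * c v" in exI)
     (simp add: sum_distrib_left algebra_simps)

lemma lattice_of_diff: "x \<in> lattice_of R \<Longrightarrow> y \<in> lattice_of R \<Longrightarrow> x - y \<in> lattice_of R"
  using lattice_of_add[of x R "\<lambda>j. -1 * y j"] lattice_of_scale[of y R "-1"]
  by (simp add: fun_diff_def plus_fun_def)

lemma lattice_of_base: "finite R \<Longrightarrow> v \<in> R \<Longrightarrow> v \<in> lattice_of R"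
  unfolding lattice_of_def
  by (rule CollectI, rule exI[of _ "\<lambda>w. of_bool (w = v)"]) (simp add: if_distrib sum.delta')

lemma lattice_of_subset:
  assumes "finite R'" "R' \<subseteq> lattice_of R"
  shows "lattice_of R' \<subseteq> lattice_of R"
proof
  fix x assume "x \<in> lattice_of R'"
  then obtain c where x: "x = (\<lambda>j. \<Sum>w\<in>R'. c w * w j)" unfolding lattice_of_def by auto
  obtain D where D: "\<And>w. w \<in> R' \<Longrightarrow> w = (\<lambda>j. \<Sum>v\<in>R. D w v * v j)"
    using assms(2) unfolding lattice_of_def by (simp add: subset_iff) metis
  have "x = (\<lambda>j. \<Sum>w\<in>R'. c w * (\<Sum>v\<in>R. D w v * v j))"
    unfolding x by (rule ext, rule sum.cong, simp, subst D, auto)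
  also have "\<dots> = (\<lambda>j. \<Sum>v\<in>R. (\<Sum>w\<in>R'. c w * D w v) * v j)"
    by (simp add: sum_distrib_left sum_distrib_right sum.swap[of _ R' R] mult.assoc)
  finally show "x \<in> lattice_of R" by (rule lattice_ofI)
qed

lemma lattice_of_in_Dn:
  assumes "finite R" "R \<subseteq> Dn n"
  shows "lattice_of R \<subseteq> Dn n"
proof
  fix x assume "x \<in> lattice_of R"
  then obtain c where x: "x = (\<lambda>j. \<Sum>v\<in>R. c v * v j)" unfolding lattice_of_def by auto
  have "\<forall>i\<ge>n. x i = 0" using assms(2) unfolding x Dn_def by (auto intro!: sum.neutral)
  moreover have "(\<Sum>i<n. x i) = (\<Sum>v\<in>R. c v * (\<Sum>i<n. v i))"
    unfolding x by (simp add: sum.swap[of _ "{..<n}"] sum_distrib_left)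
  moreover have "even (\<Sum>v\<in>R. c v * (\<Sum>i<n. v i))"
    using assms(2) unfolding Dn_def by (intro dvd_sum) auto
  ultimately show "x \<in> Dn n" unfolding Dn_def by simp
qed

lemma int_span_eq_lattice_of:
  assumes "inj_on r {..<n}"
  shows "int_span n r = lattice_of (r ` {..<n})"
proof
  show "int_span n r \<subseteq> lattice_of (r ` {..<n})"
  proof
    fix x assume "x \<in> int_span n r"
    then obtain c where x: "x = (\<lambda>j. \<Sum>i<n. c i * r i j)" unfolding int_span_def by auto
    have "x = (\<lambda>j. \<Sum>v\<in>r ` {..<n}. c (the_inv_into {..<n} r v) * v j)"
      unfolding x using assms by (simp add: sum.reindex the_inv_into_f_f)
    then show "x \<in> lattice_of (r ` {..<n})" by (rule lattice_ofI)
  qed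
next
  show "lattice_of (r ` {..<n}) \<subseteq> int_span n r"
  proof
    fix x assume "x \<in> lattice_of (r ` {..<n})"
    then obtain c where x: "x = (\<lambda>j. \<Sum>v\<in>r ` {..<n}. c v * v j)" unfolding lattice_of_def by auto
    have "x = (\<lambda>j. \<Sum>i<n. (c \<circ> r) i * r i j)" unfolding x using assms by (simp add: sum.reindex)
    then show "x \<in> int_span n r" unfolding int_span_def by blast
  qed
qed

lemma lin_indep_setD:
  fixes c :: "(nat \<Rightarrow> int) \<Rightarrow> real"
  shows "lin_indep_set R \<Longrightarrow> (\<And>j. (\<Sum>v\<in>R. c v * of_int (v j)) = 0) \<Longrightarrow> v \<in> R \<Longrightarrow> c v = 0"
  unfolding lin_indep_set_def by blast

lemma lin_indep_set_subset:
  assumes "lin_indep_set R" "finite R" "R' \<subseteq> R"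
  shows "lin_indep_set R'"
  unfolding lin_indep_set_def
proof (intro allI impI ballI)
  fix c :: "(nat \<Rightarrow> int) \<Rightarrow> real" and v
  assume h: "\<forall>j. (\<Sum>v\<in>R'. c v * of_int (v j)) = 0" and v: "v \<in> R'"
  have "(\<Sum>w\<in>R. (if w \<in> R' then c w else 0) * of_int (w j)) = 0" for j
    using h sum.mono_neutral_right[of R R' "\<lambda>w. (if w \<in> R' then c w else 0) * of_int (w j)"]
      assms(2,3) by (simp add: finite_subset)
  from lin_indep_setD[OF assms(1) this] v assms(3) show "c v = 0" by (metis subsetD)
qed

lemma lin_indep_set_zero_notin: "lin_indep_set R \<Longrightarrow> 0 \<notin> R"
  using lin_indep_setD[of R "\<lambda>v. of_bool (v = 0)" 0] by (force intro: sum.neutral)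

lemma lin_indep_set_image:
  assumes "inj_on r {..<n}" "lin_indep n r"
  shows "lin_indep_set (r ` {..<n})"
  unfolding lin_indep_set_def
proof (intro allI impI ballI)
  fix c :: "(nat \<Rightarrow> int) \<Rightarrow> real" and v
  assume "\<forall>j. (\<Sum>v\<in>r ` {..<n}. c v * of_int (v j)) = 0" and v: "v \<in> r ` {..<n}"
  then have "\<forall>j. (\<Sum>i<n. (c \<circ> r) i * of_int (r i j)) = 0" using assms(1) by (simp add: sum.reindex)
  then have "\<forall>i<n. (c \<circ> r) i = 0" using assms(2) unfolding lin_indep_def by blast
  then show "c v = 0" using v by auto
qed

lemma lin_indep_inj:
  assumes "lin_indep n r"
  shows "inj_on r {..<n}"
proof (rule inj_onI, rule ccontr)
  fix i k assume h: "i \<in> {..<n}" "k \<in> {..<n}" "r i = r k" "i \<noteq> k"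
  define c :: "nat \<Rightarrow> real" where "c = (\<lambda>l. if l = i then 1 else if l = k then -1 else 0)"
  have "(\<Sum>l<n. c l * real_of_int (r l j)) = c i * real_of_int (r i j) + c k * real_of_int (r k j)" for j
    by (rule sum_two_points) (use h in \<open>auto simp: c_def\<close>)
  then have "\<forall>j. (\<Sum>l<n. c l * real_of_int (r l j)) = 0" using h by (simp add: c_def)
  then have "c i = 0" using assms h(1) unfolding lin_indep_def by blast
  then show False by (simp add: c_def)
qed

lemma lin_indep_set_exchange:
  fixes \<alpha> \<beta> :: int
  assumes "lin_indep_set R" "finite R" "r \<in> R" "r' \<in> R" "r \<noteq> r'" "\<alpha> \<noteq> 0"
  defines "w \<equiv> \<lambda>j. \<alpha> * r j - \<beta> * r' j"
  shows "w \<notin> R - {r, r'}" "lin_indep_set (insert w (R - {r, r'}))"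
proof -
  have split: "(\<Sum>v\<in>R. f v) = f r + f r' + (\<Sum>v\<in>R - {r, r'}. f v)" for f :: "_ \<Rightarrow> real"
    using assms(2-5) sum.remove[of R r f] sum.remove[of "R - {r}" r' f]
    by (simp add: Diff_insert2[symmetric] insert_commute)
  show w: "w \<notin> R - {r, r'}"
  proof
    assume wR: "w \<in> R - {r, r'}"
    define c :: "(nat \<Rightarrow> int) \<Rightarrow> real" where
      "c = (\<lambda>v. if v = r then of_int \<alpha> else if v = r' then - of_int \<beta> else if v = w then -1 else 0)"
    have "(\<Sum>v\<in>R - {r, r'}. c v * of_int (v j)) = (\<Sum>v\<in>R - {r, r'}. if v = w then - of_int (w j) else 0)" for j
      by (rule sum.cong) (auto simp: c_def)
    then have "(\<Sum>v\<in>R. c v * of_int (v j)) = 0" for j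
      using wR assms(2,5) by (simp add: split c_def w_def)
    from lin_indep_setD[OF assms(1) this, of w] wR show False by (simp add: c_def)
  qed
  show "lin_indep_set (insert w (R - {r, r'}))"
    unfolding lin_indep_set_def
  proof (intro allI impI ballI)
    fix c :: "(nat \<Rightarrow> int) \<Rightarrow> real" and v
    assume h: "\<forall>j. (\<Sum>v\<in>insert w (R - {r, r'}). c v * of_int (v j)) = 0"
      and v: "v \<in> insert w (R - {r, r'})"
    define c' where "c' = (\<lambda>v. if v = r then c w * of_int \<alpha> else if v = r' then - c w * of_int \<beta> else c v)"
    have "(\<Sum>v\<in>R - {r, r'}. c' v * of_int (v j)) = (\<Sum>v\<in>R - {r, r'}. c v * of_int (v j))" for j
      by (rule sum.cong) (auto simp: c'_def)
    then have "(\<Sum>v\<in>R. c' v * of_int (v j)) = (\<Sum>v\<in>insert w (R - {r, r'}). c v * of_int (v j))" for j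
      using w assms(2,5) by (simp add: split c'_def w_def algebra_simps)
    then have c': "v \<in> R \<Longrightarrow> c' v = 0" for v using lin_indep_setD[OF assms(1)] h by metis
    then have "c w = 0" using c'[OF assms(3)] assms(6) by (simp add: c'_def)
    then show "c v = 0" using v c'[of v] by (auto simp: c'_def)
  qed
qed

lemma lin_indep_set_card_le:
  assumes "finite W" "finite R" "lin_indep_set R" "\<forall>v\<in>R. supported_on W v"
  shows "card R \<le> card W"
proof -
  interpret real_seq: vector_space "\<lambda>(c::real) (f::nat \<Rightarrow> real) j. c * f j"
    by unfold_locales (auto simp: algebra_simps fun_eq_iff)
  define F where "F = (\<lambda>(v::nat \<Rightarrow> int) j. real_of_int (v j))"
  have injF: "inj F" unfolding F_def inj_def fun_eq_iff by simp
  define e where "e = (\<lambda>k (j::nat). if j = k then 1 else (0::real))"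
  have indep: "real_seq.independent (F ` R)"
  proof (rule real_seq.independent_if_scalars_zero)
    show "finite (F ` R)" using assms by simp
    fix c u assume h: "(\<Sum>v\<in>F ` R. (\<lambda>j. c v * v j)) = 0" and u: "u \<in> F ` R"
    then obtain w where w: "w \<in> R" "u = F w" by auto
    have "(\<Sum>v\<in>R. (c \<circ> F) v * of_int (v j)) = 0" for j
    proof -
      have "(\<Sum>v\<in>F ` R. c v * v j) = 0" using fun_cong[OF h, of j] by (simp add: sum_fun_apply)
      then show ?thesis using injF by (simp add: sum.reindex inj_on_def F_def)
    qed
    from lin_indep_setD[OF assms(3) this w(1)] show "c u = 0" using w by simp
  qed
  have "F ` R \<subseteq> real_seq.span (e ` W)"
  proof
    fix u assume "u \<in> F ` R"
    then obtain v where v: "v \<in> R" "u = F v" by auto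
    have "u = (\<Sum>k\<in>W. (\<lambda>j. u k * e k j))"
      using assms(1,4) v
      by (auto simp: fun_eq_iff sum_fun_apply e_def F_def supported_on_def if_distrib cong: if_cong)
    also have "\<dots> \<in> real_seq.span (e ` W)"
      by (intro real_seq.span_sum real_seq.span_scale real_seq.span_base) auto
    finally show "u \<in> real_seq.span (e ` W)" .
  qed
  then have "card (F ` R) \<le> card (e ` W)"
    using real_seq.independent_span_bound[OF _ indep] assms(1) by auto
  also have "\<dots> \<le> card W" by (rule card_image_le[OF assms(1)])
  finally show ?thesis using card_image[OF inj_on_subset[OF injF]] by simp
qed

definition signed_pair :: "nat \<Rightarrow> nat \<Rightarrow> int \<Rightarrow> int \<Rightarrow> nat \<Rightarrow> int" where
  "signed_pair a b s t = (\<lambda>j. if j = a then s else if j = b then t else 0)"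

definition is_root :: "nat set \<Rightarrow> (nat \<Rightarrow> int) \<Rightarrow> bool" where
  "is_root V v \<longleftrightarrow> (\<exists>a b s t. a \<in> V \<and> b \<in> V \<and> a \<noteq> b \<and> (s = 1 \<or> s = -1) \<and> (t = 1 \<or> t = -1)
                     \<and> v = signed_pair a b s t)"

lemma signed_pair_in_Dn_roots:
  assumes "a < n" "b < n" "a \<noteq> b" "s = 1 \<or> s = -1" "t = 1 \<or> t = -1"
  shows "signed_pair a b s t \<in> Dn_roots n"
proof -
  have "(\<Sum>j<n. f (signed_pair a b s t j)) = f s + f t" if "f 0 = 0" for f :: "int \<Rightarrow> int"
    by (subst sum_two_points[of _ a b]) (use assms that in \<open>auto simp: signed_pair_def\<close>)
  from this[of id] this[of "\<lambda>z. z^2"] show ?thesis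
    using assms unfolding Dn_roots_def Dn_def by (auto simp: signed_pair_def)
qed

lemma int_square_ne_two: "(z::int)^2 \<noteq> 2"
proof
  assume "z^2 = 2"
  then have "\<bar>z\<bar> ^ 2 = 2" by simp
  moreover have "\<bar>z\<bar> \<le> 1 \<or> 2 \<le> \<bar>z\<bar>" by linarith
  ultimately show False using power_mono[of 2 "\<bar>z\<bar>" 2] power_mono[of "\<bar>z\<bar>" 1 2] by auto
qed

lemma Dn_roots_is_root:
  assumes "x \<in> Dn_roots n"
  shows "is_root {..<n} x"
proof -
  have x0: "\<forall>i\<ge>n. x i = 0" and sq: "(\<Sum>i<n. (x i)^2) = 2"
    using assms unfolding Dn_roots_def Dn_def by auto
  define N where "N = {i\<in>{..<n}. x i \<noteq> 0}"
  have sqN: "(\<Sum>i\<in>N. (x i)^2) = 2"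
    using sq sum.mono_neutral_left[of "{..<n}" N "\<lambda>i. (x i)^2"] by (auto simp: N_def)
  have ge1: "1 \<le> (x i)^2" if "i \<in> N" for i
    using that unfolding N_def by (simp add: int_one_le_iff_zero_less)
  have "int (card N) \<le> (\<Sum>i\<in>N. (x i)^2)" using sum_mono[OF ge1] by simp
  then have "card N \<le> 2" using sqN by simp
  moreover have "card N \<noteq> 0"
  proof
    assume "card N = 0"
    then have "N = {}" by (simp add: N_def)
    then show False using sqN by simp
  qed
  moreover have "card N \<noteq> 1"
  proof
    assume "card N = 1"
    then obtain a where "N = {a}" by (rule card_1_singletonE)
    then show False using sqN int_square_ne_two[of "x a"] by simp
  qed
  ultimately have "card N = 2" by linarith
  then obtain a b where ab: "N = {a, b}" "a \<noteq> b" by (auto simp: card_2_iff)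
  have "(x a)^2 + (x b)^2 = 2" "1 \<le> (x a)^2" "1 \<le> (x b)^2" using sqN ab ge1 by auto
  then have "(x a)^2 = 1" "(x b)^2 = 1" by linarith+
  then have signs: "x a = 1 \<or> x a = -1" "x b = 1 \<or> x b = -1" by (auto simp: power2_eq_1_iff)
  have "x j = 0" if "j \<noteq> a" "j \<noteq> b" for j
    using that x0 ab(1) unfolding N_def by (cases "j < n") auto
  then have "x = signed_pair a b (x a) (x b)"
    using ab(2) by (auto simp: fun_eq_iff signed_pair_def)
  moreover have "a \<in> {..<n}" "b \<in> {..<n}" using ab(1) unfolding N_def by auto
  ultimately show ?thesis unfolding is_root_def using ab(2) signs by blast
qed

lemma signed_pair_fork_combination:
  assumes "a \<noteq> b" "a \<noteq> c" "b \<noteq> c"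
  shows "(\<lambda>j. t * signed_pair a b s u j - s * signed_pair a c t v j) = signed_pair b c (t * u) (- (s * v))"
  using assms by (auto simp: fun_eq_iff signed_pair_def)

lemma signed_pair_parallel_combination:
  assumes "a \<noteq> b"
  shows "(\<lambda>j. t * signed_pair a b s u j - s * signed_pair a b t v j) = (\<lambda>j. (t * u - s * v) * indicator {b} j)"
  using assms by (auto simp: fun_eq_iff signed_pair_def indicator_def)

lemma is_root_supported: "is_root V r \<Longrightarrow> supported_on V r"
  unfolding is_root_def supported_on_def signed_pair_def by auto

lemma is_root_at:
  assumes "is_root V r" "r a \<noteq> 0"
  obtains b s t where "a \<in> V" "b \<in> V" "b \<noteq> a" "s = 1 \<or> s = -1" "t = 1 \<or> t = -1"
    "r = signed_pair a b s t"
proof -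
  obtain p q s t where h: "p \<in> V" "q \<in> V" "p \<noteq> q" "s = 1 \<or> s = -1" "t = 1 \<or> t = -1"
    "r = signed_pair p q s t"
    using assms(1) unfolding is_root_def by blast
  have "signed_pair p q s t = signed_pair q p t s"
    using h(3) by (auto simp: fun_eq_iff signed_pair_def)
  moreover have "a = p \<or> a = q" using assms(2) h(6) by (auto simp: signed_pair_def split: if_splits)
  ultimately show ?thesis using that h by metis
qed

lemma is_root_value: "is_root V r \<Longrightarrow> r a \<noteq> 0 \<Longrightarrow> r a = 1 \<or> r a = -1"
  unfolding is_root_def signed_pair_def by (auto split: if_splits)

lemma is_root_avoid: "is_root V r \<Longrightarrow> r a = 0 \<Longrightarrow> is_root (V - {a}) r"
  unfolding is_root_def signed_pair_def by (auto 0 4)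

lemma is_root_card_support: "is_root V r \<Longrightarrow> card {a\<in>V. r a \<noteq> 0} = 2"
proof -
  assume "is_root V r"
  then obtain p q s t where h: "p \<in> V" "q \<in> V" "p \<noteq> q" "s = 1 \<or> s = -1" "t = 1 \<or> t = -1"
    "r = signed_pair p q s t"
    unfolding is_root_def by blast
  then have "{a\<in>V. r a \<noteq> 0} = {p, q}" unfolding signed_pair_def by auto
  then show ?thesis using h(3) by simp
qed

lemma lattice_of_mono: "finite R \<Longrightarrow> R' \<subseteq> R \<Longrightarrow> lattice_of R' \<subseteq> lattice_of R"
  using lattice_of_subset[of R' R] lattice_of_base[of R] by (blast intro: finite_subset)

subsection \<open>Reduction of a root basis\<close>

definition root_basis :: "nat set \<Rightarrow> (nat \<Rightarrow> int) set \<Rightarrow> bool" where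
  "root_basis V R \<longleftrightarrow> finite R \<and> card R = card V \<and> (\<forall>v\<in>R. is_root V v) \<and> lin_indep_set R"

definition represents_mod :: "(nat \<Rightarrow> int) set \<Rightarrow> nat set \<Rightarrow> nat set \<Rightarrow> bool" where
  "represents_mod R A V \<longleftrightarrow> (\<forall>x. supported_on V x \<longrightarrow> (\<exists>S\<subseteq>A. x - indicator S \<in> lattice_of R))"

definition has_small_representatives :: "(nat \<Rightarrow> int) set \<Rightarrow> nat set \<Rightarrow> bool" where
  "has_small_representatives R V \<longleftrightarrow> (\<exists>A\<subseteq>V. 2 * card A \<le> card V \<and> represents_mod R A V)"

lemma represents_mod_insert_vertex:
  assumes "represents_mod R' A (V - {a})" "lattice_of R' \<subseteq> lattice_of R"
    and "r \<in> lattice_of R" "supported_on V r" "r a = 1 \<or> r a = -1"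
  shows "represents_mod R A V"
  unfolding represents_mod_def
proof (intro allI impI)
  fix x assume x: "supported_on V x"
  define y where "y = x - (\<lambda>j. r a * x a * r j)"
  have "supported_on (V - {a}) y" using x assms(4,5) by (auto simp: supported_on_def y_def)
  then obtain S where S: "S \<subseteq> A" "y - indicator S \<in> lattice_of R'"
    using assms(1) unfolding represents_mod_def by blast
  have "y - indicator S + (\<lambda>j. r a * x a * r j) \<in> lattice_of R"
    using lattice_of_add[OF subsetD[OF assms(2) S(2)] lattice_of_scale[OF assms(3)]] .
  moreover have "y - indicator S + (\<lambda>j. r a * x a * r j) = x - indicator S"
    by (simp add: y_def fun_eq_iff)
  ultimately show "\<exists>S\<subseteq>A. x - indicator S \<in> lattice_of R" using S(1) by auto
qed

lemma represents_mod_insert_even_coord: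
  assumes "represents_mod R' A (V - {b})" "lattice_of R' \<subseteq> lattice_of R"
    and "(\<lambda>j. 2 * indicator {b} j) \<in> lattice_of R" "b \<notin> A"
  shows "represents_mod R (insert b A) V"
  unfolding represents_mod_def
proof (intro allI impI)
  fix x assume x: "supported_on V x"
  define y where "y = x - (\<lambda>j. x b * indicator {b} j)"
  have "supported_on (V - {b}) y" using x by (auto simp: supported_on_def y_def indicator_def)
  then obtain S where S: "S \<subseteq> A" "y - indicator S \<in> lattice_of R'"
    using assms(1) unfolding represents_mod_def by blast
  define S' where "S' = (if odd (x b) then insert b S else S)"
  have "y - indicator S + (\<lambda>j. (x b div 2) * (2 * indicator {b} j)) \<in> lattice_of R"
    using lattice_of_add[OF subsetD[OF assms(2) S(2)] lattice_of_scale[OF assms(3)]] .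
  moreover have "y - indicator S + (\<lambda>j. (x b div 2) * (2 * indicator {b} j)) = x - indicator S'"
  proof
    fix j
    have "b \<notin> S" using S(1) assms(4) by blast
    moreover have "x b div 2 * 2 = x b - of_bool (odd (x b))"
      using minus_mod_eq_div_mult[of "x b" 2] mod_2_eq_odd[of "x b"] by simp
    ultimately show "(y - indicator S + (\<lambda>j. (x b div 2) * (2 * indicator {b} j))) j = (x - indicator S') j"
      by (cases "j = b") (simp_all add: y_def S'_def indicator_def)
  qed
  moreover have "S' \<subseteq> insert b A" using S(1) by (auto simp: S'_def)
  ultimately show "\<exists>S\<subseteq>insert b A. x - indicator S \<in> lattice_of R" by auto
qed

lemma has_small_representatives_empty: "has_small_representatives R {}"
proof -
  have "x - indicator {} = 0" if "supported_on {} x" for x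
    using that by (simp add: supported_on_def fun_eq_iff)
  then have "x - indicator {} \<in> lattice_of R" if "supported_on {} x" for x
    using that lattice_of_zero by metis
  then show ?thesis unfolding has_small_representatives_def represents_mod_def by auto
qed

lemma root_basis_degree_pos:
  assumes "finite V" "root_basis V R" "a \<in> V"
  shows "{v\<in>R. v a \<noteq> 0} \<noteq> {}"
proof
  assume "{v\<in>R. v a \<noteq> 0} = {}"
  then have "\<forall>v\<in>R. supported_on (V - {a}) v"
    using assms(2) is_root_supported unfolding root_basis_def supported_on_def by blast
  then have "card R \<le> card (V - {a})"
    using lin_indep_set_card_le[of "V - {a}" R] assms(1,2) unfolding root_basis_def by blast
  moreover have "card V > 0" using assms(1,3) by (auto simp: card_gt_0_iff)
  ultimately show False using assms unfolding root_basis_def by simp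
qed

lemma root_basis_degree_sum:
  assumes "finite V" "root_basis V R"
  shows "(\<Sum>a\<in>V. card {v\<in>R. v a \<noteq> 0}) = 2 * card V"
proof -
  have R: "finite R" "card R = card V" "\<forall>v\<in>R. is_root V v" using assms(2) unfolding root_basis_def by auto
  have "(\<Sum>a\<in>V. card {v\<in>R. v a \<noteq> 0}) = (\<Sum>a\<in>V. \<Sum>v\<in>R. of_bool (v a \<noteq> 0))"
    using R(1) by (simp add: Int_def conj_commute)
  also have "\<dots> = (\<Sum>v\<in>R. \<Sum>a\<in>V. of_bool (v a \<noteq> 0))" by (rule sum.swap)
  also have "\<dots> = (\<Sum>v\<in>R. card {a\<in>V. v a \<noteq> 0})"
    using assms(1) by (simp add: Int_def conj_commute)
  also have "\<dots> = (\<Sum>v\<in>R. 2)" using R(3) is_root_card_support by (intro sum.cong) auto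
  finally show ?thesis using R(2) by simp
qed

lemma root_basis_degree_cases:
  assumes "finite V" "root_basis V R"
  obtains a r where "a \<in> V" "{v\<in>R. v a \<noteq> 0} = {r}"
  | "\<forall>a\<in>V. card {v\<in>R. v a \<noteq> 0} = 2"
proof (cases "\<exists>a\<in>V. card {v\<in>R. v a \<noteq> 0} = 1")
  case True
  then show ?thesis using that(1) by (auto simp: card_1_singleton_iff)
next
  case False
  have finR: "finite R" using assms(2) unfolding root_basis_def by simp
  have ge2: "2 \<le> card {v\<in>R. v a \<noteq> 0}" if "a \<in> V" for a
  proof -
    have "card {v\<in>R. v a \<noteq> 0} \<noteq> 0" using root_basis_degree_pos[OF assms that] finR by simp
    moreover have "card {v\<in>R. v a \<noteq> 0} \<noteq> 1" using False that by blast
    ultimately show ?thesis by linarith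
  qed
  have "(\<Sum>a\<in>V. 2) = (\<Sum>a\<in>V. card {v\<in>R. v a \<noteq> 0})" using root_basis_degree_sum[OF assms] by simp
  from sum_mono_inv[OF this ge2 _ assms(1)] have "\<forall>a\<in>V. card {v\<in>R. v a \<noteq> 0} = 2" by simp
  then show ?thesis by (rule that(2))
qed

lemma small_representatives_leaf:
  assumes "finite V" "root_basis V R" "a \<in> V" "{v\<in>R. v a \<noteq> 0} = {r}"
    and IH: "\<And>V' R'. V' \<subset> V \<Longrightarrow> root_basis V' R' \<Longrightarrow> has_small_representatives R' V'"
  shows "has_small_representatives R V"
proof -
  have r: "r \<in> R" "r a \<noteq> 0" using assms(4) by auto
  have R: "finite R" "card R = card V" "\<forall>v\<in>R. is_root V v" "lin_indep_set R"
    using assms(2) unfolding root_basis_def by auto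
  have "v a = 0" if "v \<in> R - {r}" for v using that assms(4) by blast
  then have "root_basis (V - {a}) (R - {r})"
    unfolding root_basis_def using R r assms(1,3)
    by (simp add: is_root_avoid lin_indep_set_subset)
  then have "has_small_representatives (R - {r}) (V - {a})"
    using IH assms(3) by blast
  then obtain A where A: "A \<subseteq> V - {a}" "2 * card A \<le> card (V - {a})"
    "represents_mod (R - {r}) A (V - {a})"
    unfolding has_small_representatives_def by blast
  have "represents_mod R A V"
    using represents_mod_insert_vertex[OF A(3) lattice_of_mono[OF R(1)] lattice_of_base[OF R(1) r(1)]]
      is_root_supported is_root_value R(3) r by blast
  then show ?thesis
    unfolding has_small_representatives_def using A(1,2) card_Diff1_le[of V a]
    by (intro exI[of _ A]) auto
qed

lemma small_representatives_fork:
  assumes "finite V" "root_basis V R" "a \<in> V" "{v\<in>R. v a \<noteq> 0} = {r, r'}" "r \<noteq> r'"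
    and "w \<in> lattice_of R" "is_root (V - {a}) w"
    and "w \<notin> R - {r, r'}" "lin_indep_set (insert w (R - {r, r'}))"
    and IH: "\<And>V' R'. V' \<subset> V \<Longrightarrow> root_basis V' R' \<Longrightarrow> has_small_representatives R' V'"
  shows "has_small_representatives R V"
proof -
  let ?R' = "insert w (R - {r, r'})"
  have r: "r \<in> R" "r' \<in> R" "r a \<noteq> 0" using assms(4) by auto
  have R: "finite R" "card R = card V" "\<forall>v\<in>R. is_root V v"
    using assms(2) unfolding root_basis_def by auto
  have "card {r, r'} \<le> card R" using r R(1) by (intro card_mono) auto
  then have "card ?R' = card V - 1"
    using assms(5,8) r R by (simp add: card_Diff_subset)
  moreover have "v a = 0" if "v \<in> R - {r, r'}" for v using that assms(4) by blast
  ultimately have "root_basis (V - {a}) ?R'"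
    unfolding root_basis_def using R assms(1,3,7,9) by (simp add: is_root_avoid)
  then have "has_small_representatives ?R' (V - {a})"
    using IH assms(3) by blast
  then obtain A where A: "A \<subseteq> V - {a}" "2 * card A \<le> card (V - {a})" "represents_mod ?R' A (V - {a})"
    unfolding has_small_representatives_def by blast
  have "lattice_of ?R' \<subseteq> lattice_of R"
    using R(1) assms(6) lattice_of_base[OF R(1)] by (intro lattice_of_subset) auto
  then have "represents_mod R A V"
    using represents_mod_insert_vertex[OF A(3) _ lattice_of_base[OF R(1) r(1)]]
      is_root_supported is_root_value R(3) r by blast
  then show ?thesis
    unfolding has_small_representatives_def using A(1,2) card_Diff1_le[of V a]
    by (intro exI[of _ A]) auto
qed

lemma small_representatives_double_edge:
  assumes "finite V" "root_basis V R" "a \<in> V" "b \<in> V" "a \<noteq> b" "r \<noteq> r'"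
    and "{v\<in>R. v a \<noteq> 0} = {r, r'}" "{v\<in>R. v b \<noteq> 0} = {r, r'}"
    and "(\<lambda>j. 2 * indicator {b} j) \<in> lattice_of R"
    and IH: "\<And>V' R'. V' \<subset> V \<Longrightarrow> root_basis V' R' \<Longrightarrow> has_small_representatives R' V'"
  shows "has_small_representatives R V"
proof -
  have r: "r \<in> R" "r' \<in> R" "r a \<noteq> 0" using assms(7) by auto
  have R: "finite R" "card R = card V" "\<forall>v\<in>R. is_root V v" "lin_indep_set R"
    using assms(2) unfolding root_basis_def by auto
  have "card (R - {r, r'}) = card (V - {a, b})"
    using assms(3-6) r R by (simp add: card_Diff_subset)
  moreover have "is_root (V - {a, b}) v" if "v \<in> R - {r, r'}" for v
  proof -
    have "v a = 0" "v b = 0" using that assms(7,8) by blast+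
    then have "is_root (V - {a} - {b}) v" using that R(3) by (blast intro: is_root_avoid)
    then show ?thesis by (simp add: Diff_insert2[symmetric])
  qed
  ultimately have "root_basis (V - {a, b}) (R - {r, r'})"
    unfolding root_basis_def using R by (simp add: lin_indep_set_subset)
  then have "has_small_representatives (R - {r, r'}) (V - {a, b})"
    using IH assms(3) by blast
  then obtain A where A: "A \<subseteq> V - {a, b}" "2 * card A \<le> card (V - {a, b})"
    "represents_mod (R - {r, r'}) A (V - {a, b})"
    unfolding has_small_representatives_def by blast
  have "represents_mod R (insert b A) (V - {a})"
    using represents_mod_insert_even_coord[of "R - {r, r'}" A "V - {a}" b R]
      A(1,3) lattice_of_mono[OF R(1)] assms(9) by (auto simp: Diff_insert2[symmetric])
  then have "represents_mod R (insert b A) V"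
    using represents_mod_insert_vertex[OF _ order_refl lattice_of_base[OF R(1) r(1)]]
      is_root_supported is_root_value R(3) r by blast
  moreover have "2 * card (insert b A) \<le> card V"
  proof -
    have "card {a, b} \<le> card V" using assms(1,3,4) by (intro card_mono) auto
    moreover have "b \<notin> A" using A(1) by blast
    ultimately show ?thesis
      using A(2) assms(1,3-5) finite_subset[OF A(1)] by (simp add: card_Diff_subset)
  qed
  ultimately show ?thesis
    unfolding has_small_representatives_def using A(1) assms(4) by blast
qed

lemma fork_roots_merge:
  assumes "lin_indep_set R" "finite R" "r \<in> R" "r' \<in> R" "r \<noteq> r'"
    and "r = signed_pair a b \<sigma> \<beta>" "r' = signed_pair a c \<sigma>' \<gamma>"
    and "b \<in> V" "c \<in> V" "b \<noteq> a" "c \<noteq> a" "b \<noteq> c"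
    and "\<sigma> = 1 \<or> \<sigma> = -1" "\<beta> = 1 \<or> \<beta> = -1" "\<sigma>' = 1 \<or> \<sigma>' = -1" "\<gamma> = 1 \<or> \<gamma> = -1"
  obtains w where "w \<in> lattice_of R" "is_root (V - {a}) w"
    "w \<notin> R - {r, r'}" "lin_indep_set (insert w (R - {r, r'}))"
proof -
  define w where "w = (\<lambda>j. \<sigma>' * r j - \<sigma> * r' j)"
  have "w \<in> lattice_of R"
    using lattice_of_diff[OF lattice_of_scale lattice_of_scale, OF lattice_of_base lattice_of_base,
        OF assms(2,3) assms(2,4), of \<sigma>' \<sigma>]
    by (simp add: w_def fun_diff_def)
  moreover have "\<sigma>' \<noteq> 0" using assms(15) by auto
  note exchange = lin_indep_set_exchange[OF assms(1-5) this, of \<sigma>, folded w_def]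
  moreover have "w = signed_pair b c (\<sigma>' * \<beta>) (- (\<sigma> * \<gamma>))"
    unfolding w_def assms(6,7) using assms(10-12) by (intro signed_pair_fork_combination) auto
  moreover have "\<sigma>' * \<beta> = 1 \<or> \<sigma>' * \<beta> = -1" "- (\<sigma> * \<gamma>) = 1 \<or> - (\<sigma> * \<gamma>) = -1"
    using assms(13-16) by auto
  ultimately show ?thesis
    using that assms(8-12) unfolding is_root_def by blast
qed

text \<open>The combination eliminating a is k e_b with k in {0, 2, -2}, and independence excludes 0.\<close>
lemma parallel_roots_double_unit:
  assumes "lin_indep_set R" "finite R" "r \<in> R" "r' \<in> R" "r \<noteq> r'" "a \<noteq> b"
    and "r = signed_pair a b \<sigma> \<beta>" "r' = signed_pair a b \<sigma>' \<gamma>"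
    and "\<sigma> = 1 \<or> \<sigma> = -1" "\<beta> = 1 \<or> \<beta> = -1" "\<sigma>' = 1 \<or> \<sigma>' = -1" "\<gamma> = 1 \<or> \<gamma> = -1"
  shows "(\<lambda>j. 2 * indicator {b} j) \<in> lattice_of R"
proof -
  define w where "w = (\<lambda>j. \<sigma>' * r j - \<sigma> * r' j)"
  define k where "k = \<sigma>' * \<beta> - \<sigma> * \<gamma>"
  have w_lat: "w \<in> lattice_of R"
    using lattice_of_diff[OF lattice_of_scale lattice_of_scale, OF lattice_of_base lattice_of_base,
        OF assms(2,3) assms(2,4), of \<sigma>' \<sigma>]
    by (simp add: w_def fun_diff_def)
  have wk: "w = (\<lambda>j. k * indicator {b} j)"
    unfolding w_def k_def assms(7,8) using assms(6) by (rule signed_pair_parallel_combination)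
  have "\<sigma>' \<noteq> 0" using assms(11) by auto
  from lin_indep_set_exchange(2)[OF assms(1-5) this, of \<sigma>, folded w_def]
  have "w \<noteq> 0" using lin_indep_set_zero_notin by blast
  then have "k \<noteq> 0" unfolding wk by (auto simp: fun_eq_iff)
  then have "k = 2 \<or> k = -2" unfolding k_def using assms(9-12) by auto
  then have "(\<lambda>j. 2 * indicator {b} j) = (\<lambda>j. (k div 2) * w j)" unfolding wk by auto
  then show ?thesis using lattice_of_scale[OF w_lat] by simp
qed

lemma small_representatives_degree_two:
  assumes "finite V" "root_basis V R" "V \<noteq> {}" "\<forall>a\<in>V. card {v\<in>R. v a \<noteq> 0} = 2"
    and IH: "\<And>V' R'. V' \<subset> V \<Longrightarrow> root_basis V' R' \<Longrightarrow> has_small_representatives R' V'"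
  shows "has_small_representatives R V"
proof -
  obtain a where a: "a \<in> V" using assms(3) by blast
  obtain r r' where rr: "{v\<in>R. v a \<noteq> 0} = {r, r'}" "r \<noteq> r'"
    using assms(4) a by (auto simp: card_2_iff)
  have R: "finite R" "\<forall>v\<in>R. is_root V v" "lin_indep_set R"
    using assms(2) unfolding root_basis_def by auto
  have r: "r \<in> R" "r' \<in> R" "r a \<noteq> 0" "r' a \<noteq> 0" using rr(1) by blast+
  obtain b \<sigma> \<beta> where b: "b \<in> V" "b \<noteq> a" "\<sigma> = 1 \<or> \<sigma> = -1" "\<beta> = 1 \<or> \<beta> = -1"
    "r = signed_pair a b \<sigma> \<beta>"
    using is_root_at[of V r a] R(2) r by metis
  obtain c \<sigma>' \<gamma> where c: "c \<in> V" "c \<noteq> a" "\<sigma>' = 1 \<or> \<sigma>' = -1" "\<gamma> = 1 \<or> \<gamma> = -1"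
    "r' = signed_pair a c \<sigma>' \<gamma>"
    using is_root_at[of V r' a] R(2) r by metis
  show ?thesis
  proof (cases "b = c")
    case False
    obtain w where "w \<in> lattice_of R" "is_root (V - {a}) w"
      "w \<notin> R - {r, r'}" "lin_indep_set (insert w (R - {r, r'}))"
      using fork_roots_merge[OF R(3,1) r(1,2) rr(2) b(5) c(5) b(1) c(1) b(2) c(2) False b(3,4) c(3,4)] .
    then show ?thesis by (rule small_representatives_fork[OF assms(1,2) a rr _ _ _ _ IH])
  next
    case True
    have e_b: "(\<lambda>j. 2 * indicator {b} j) \<in> lattice_of R"
      using parallel_roots_double_unit[OF R(3,1) r(1,2) rr(2) b(2)[symmetric] b(5)]
        c(5)[folded True] b(3,4) c(3,4) by blast
    have "{r, r'} \<subseteq> {v\<in>R. v b \<noteq> 0}"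
      using r b(2-5) c(4,5) True by (auto simp: signed_pair_def)
    then have "{v\<in>R. v b \<noteq> 0} = {r, r'}"
      using assms(4) b(1) rr(2) R(1) by (intro card_subset_eq[symmetric]) auto
    then show ?thesis
      using small_representatives_double_edge[OF assms(1,2) a b(1) b(2)[symmetric] rr(2) rr(1) _ e_b IH]
      by blast
  qed
qed

lemma root_basis_has_small_representatives:
  assumes "finite V" "root_basis V R"
  shows "has_small_representatives R V"
  using assms
proof (induction V arbitrary: R rule: finite_psubset_induct)
  case (psubset V)
  have IH: "\<And>V' R'. V' \<subset> V \<Longrightarrow> root_basis V' R' \<Longrightarrow> has_small_representatives R' V'"
    using psubset.IH by blast
  show ?case
  proof (cases "V = {}")
    case True
    then show ?thesis by (simp add: has_small_representatives_empty)
  next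
    case False
    from root_basis_degree_cases[OF psubset.hyps psubset.prems] show ?thesis
    proof cases
      case (1 a r)
      then show ?thesis by (rule small_representatives_leaf[OF psubset.hyps psubset.prems _ _ IH])
    next
      case 2
      then show ?thesis by (rule small_representatives_degree_two[OF psubset.hyps psubset.prems False _ IH])
    qed
  qed
qed

subsection \<open>Counting cosets\<close>

lemma lattice_index_eq_card_cosets: "lattice_index M L = card ((\<lambda>x. (+) x ` L) ` M)"
  unfolding lattice_index_def by (simp add: plus_fun_def Setcompr_eq_image)

lemma lattice_of_coset_eq:
  assumes "x - y \<in> lattice_of R"
  shows "(+) x ` lattice_of R = (+) y ` lattice_of R"
proof (intro equalityI image_subsetI)
  fix l assume l: "l \<in> lattice_of R"
  have "x + l = y + ((x - y) + l)" "y + l = x + (l - (x - y))" by (simp_all add: algebra_simps)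
  then show "x + l \<in> (+) y ` lattice_of R" "y + l \<in> (+) x ` lattice_of R"
    using assms l by (metis image_eqI lattice_of_add lattice_of_diff)+
qed

lemma lattice_of_coset_eqD:
  assumes "(+) x ` lattice_of R = (+) y ` lattice_of R"
  shows "x - y \<in> lattice_of R"
proof -
  have "x + 0 \<in> (+) y ` lattice_of R" using assms lattice_of_zero by blast
  then obtain l where "l \<in> lattice_of R" "x = y + l" by auto
  then show ?thesis by (simp add: algebra_simps)
qed

lemma Dn_diff: "x \<in> Dn n \<Longrightarrow> y \<in> Dn n \<Longrightarrow> x - y \<in> Dn n"
  unfolding Dn_def by (auto simp: sum_subtractf)

lemma indicator_in_Dn_iff:
  assumes "S \<subseteq> {..<n}"
  shows "indicator S \<in> Dn n \<longleftrightarrow> even (card S)"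
proof -
  have "(\<Sum>i<n. indicator S i :: int) = int (card ({..<n} \<inter> S))"
    unfolding indicator_def by simp
  then have "(\<Sum>i<n. indicator S i :: int) = int (card S)"
    using assms by (simp add: Int_absorb1)
  then show ?thesis using assms unfolding Dn_def by (auto simp: indicator_def)
qed

lemma card_cosets_le_even_subsets:
  assumes "finite R" "R \<subseteq> Dn n" "A \<subseteq> {..<n}" "represents_mod R A {..<n}"
  shows "finite ((\<lambda>x. (+) x ` lattice_of R) ` Dn n)"
    and "card ((\<lambda>x. (+) x ` lattice_of R) ` Dn n) \<le> card {S. S \<subseteq> A \<and> even (card S)}"
proof -
  let ?E = "{S. S \<subseteq> A \<and> even (card S)}"
  have sub: "(\<lambda>x. (+) x ` lattice_of R) ` Dn n \<subseteq> (\<lambda>S. (+) (indicator S) ` lattice_of R) ` ?E"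
  proof
    fix C assume "C \<in> (\<lambda>x. (+) x ` lattice_of R) ` Dn n"
    then obtain x where x: "x \<in> Dn n" "C = (+) x ` lattice_of R" by blast
    have "supported_on {..<n} x" using x(1) unfolding Dn_def supported_on_def by auto
    then obtain S where S: "S \<subseteq> A" "x - indicator S \<in> lattice_of R"
      using assms(4) unfolding represents_mod_def by blast
    have "indicator S = x - (x - indicator S)" by simp
    also have "\<dots> \<in> Dn n" using Dn_diff x(1) S(2) lattice_of_in_Dn[OF assms(1,2)] by blast
    finally have "even (card S)" using indicator_in_Dn_iff S(1) assms(3) by blast
    then show "C \<in> (\<lambda>S. (+) (indicator S) ` lattice_of R) ` ?E"
      using x(2) S lattice_of_coset_eq by blast
  qed
  have finE: "finite ?E" using finite_subset[OF assms(3)] by simp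
  then show "finite ((\<lambda>x. (+) x ` lattice_of R) ` Dn n)" using finite_subset[OF sub] by blast
  then have "card ((\<lambda>x. (+) x ` lattice_of R) ` Dn n) \<le> card ((\<lambda>S. (+) (indicator S) ` lattice_of R) ` ?E)"
    using sub finE by (intro card_mono) auto
  also have "\<dots> \<le> card ?E" by (rule card_image_le[OF finE])
  finally show "card ((\<lambda>x. (+) x ` lattice_of R) ` Dn n) \<le> card ?E" .
qed

lemma card_even_subsets:
  assumes "finite A" "A \<noteq> {}"
  shows "card {S. S \<subseteq> A \<and> even (card S)} = 2 ^ (card A - 1)"
proof -
  have "card (Pow A) = card {S. S \<subseteq> A \<and> even (card S)} + card {S. S \<subseteq> A \<and> odd (card S)}"
    using assms(1) by (subst card_Un_disjoint[symmetric]) (auto intro: arg_cong[where f = card])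
  moreover have "card {S. S \<subseteq> A \<and> even (card S)} = card {S. S \<subseteq> A \<and> odd (card S)}"
    using card_subsupersets_even_odd[OF assms(1), of "{}"] assms(2) by auto
  moreover have "card A = Suc (card A - 1)" using assms by (simp add: card_gt_0_iff)
  ultimately show ?thesis using assms(1) card_Pow[of A] by (metis mult_2 power_Suc nat_mult_eq_cancel1 zero_less_numeral)
qed

lemma card_even_subsets_le:
  assumes "finite A" "card A \<le> k"
  shows "card {S. S \<subseteq> A \<and> even (card S)} \<le> 2 ^ (k - 1)"
proof (cases "A = {}")
  case True
  then have "{S. S \<subseteq> A \<and> even (card S)} = {{}}" by auto
  then show ?thesis by simp
next
  case False
  then show ?thesis using card_even_subsets[OF assms(1) False] assms(2) by (simp add: power_increasing)
qed

theorem lattice_index_root_sublattice_le: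
  assumes "\<forall>i<n. r i \<in> Dn_roots n" "lin_indep n r"
  shows "finite ((\<lambda>x. (+) x ` int_span n r) ` Dn n)"
    and "lattice_index (Dn n) (int_span n r) \<le> 2 ^ (n div 2 - 1)"
proof -
  let ?R = "r ` {..<n}"
  have inj: "inj_on r {..<n}" using lin_indep_inj[OF assms(2)] .
  have "root_basis {..<n} ?R"
    unfolding root_basis_def
    using assms Dn_roots_is_root card_image[OF inj] lin_indep_set_image[OF inj] by auto
  then obtain A where A: "A \<subseteq> {..<n}" "2 * card A \<le> n" "represents_mod ?R A {..<n}"
    using root_basis_has_small_representatives[of "{..<n}" ?R]
    unfolding has_small_representatives_def by auto
  have R: "finite ?R" "?R \<subseteq> Dn n" using assms(1) unfolding Dn_roots_def by auto
  note cosets = card_cosets_le_even_subsets[OF R A(1,3)]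
  show "finite ((\<lambda>x. (+) x ` int_span n r) ` Dn n)"
    using cosets(1) int_span_eq_lattice_of[OF inj] by simp
  have "card A \<le> n div 2" using A(2) by linarith
  then have "card {S. S \<subseteq> A \<and> even (card S)} \<le> 2 ^ (n div 2 - 1)"
    using card_even_subsets_le finite_subset[OF A(1)] by blast
  then show "lattice_index (Dn n) (int_span n r) \<le> 2 ^ (n div 2 - 1)"
    using cosets(2) int_span_eq_lattice_of[OF inj] lattice_index_eq_card_cosets by simp
qed

subsection \<open>The extremal root sublattice\<close>

text \<open>Root i is e_2k + e_(2k+1) for i = 2k and e_2k - e_(2k+1) for i = 2k+1.\<close>
definition pair_roots :: "nat \<Rightarrow> nat \<Rightarrow> int" where
  "pair_roots i = signed_pair (2 * (i div 2)) (2 * (i div 2) + 1) 1 (if odd i then -1 else 1)"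

lemma pair_roots_apply:
  "pair_roots i j = (if j div 2 = i div 2 then (if odd i \<and> odd j then -1 else 1) else 0)"
proof -
  have "j div 2 = i div 2 \<longleftrightarrow> j = 2 * (i div 2) \<or> j = 2 * (i div 2) + 1" by presburger
  then show ?thesis unfolding pair_roots_def signed_pair_def by auto
qed

lemma pair_roots_in_Dn_roots: "i < 2 * d \<Longrightarrow> pair_roots i \<in> Dn_roots (2 * d)"
  unfolding pair_roots_def by (rule signed_pair_in_Dn_roots) presburger+

lemma lin_indep_pair_roots: "lin_indep (2 * d) pair_roots"
  unfolding lin_indep_def
proof (intro allI impI)
  fix c :: "nat \<Rightarrow> real" and i
  assume h: "\<forall>j. (\<Sum>i<2 * d. c i * real_of_int (pair_roots i j)) = 0" and i: "i < 2 * d"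
  define a where "a = 2 * (i div 2)"
  have a: "a < 2 * d" "a + 1 < 2 * d" "a div 2 = i div 2" "(a + 1) div 2 = i div 2" "even a"
    "i = a \<or> i = a + 1"
    unfolding a_def using i by presburger+
  have eval: "(\<Sum>k<2 * d. c k * real_of_int (pair_roots k j))
      = c a * real_of_int (pair_roots a j) + c (a + 1) * real_of_int (pair_roots (a + 1) j)"
    if "j div 2 = i div 2" for j
  proof (rule sum_two_points)
    fix k assume "k \<in> {..<2 * d}" "k \<noteq> a" "k \<noteq> a + 1"
    then have "k div 2 \<noteq> j div 2" using that unfolding a_def by presburger
    then show "c k * real_of_int (pair_roots k j) = 0" by (simp add: pair_roots_apply)
  qed (use a in auto)
  have "pair_roots a a = 1" "pair_roots (a + 1) a = 1" "pair_roots a (a + 1) = 1"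
    "pair_roots (a + 1) (a + 1) = -1"
    using a by (simp_all add: pair_roots_apply)
  then have "c a + c (a + 1) = 0" "c a - c (a + 1) = 0"
    using h eval[OF a(3)] eval[OF a(4)] by simp_all
  then show "c i = 0" using a(6) by auto
qed

lemma int_span_pair_roots_even:
  assumes "y \<in> int_span n pair_roots"
  shows "even (y (2 * k) + y (2 * k + 1))"
proof -
  obtain c where y: "y = (\<lambda>j. \<Sum>i<n. c i * pair_roots i j)" using assms unfolding int_span_def by auto
  have "even (pair_roots i (2 * k) + pair_roots i (2 * k + 1))" for i
    unfolding pair_roots_apply by (cases "i div 2 = k") auto
  then show ?thesis unfolding y by (simp add: sum.distrib[symmetric] distrib_left[symmetric] dvd_sum)
qed

lemma card_even_subsets_le_lattice_index:
  "card {S. S \<subseteq> {..<d} \<and> even (card S)} \<le> lattice_index (Dn (2 * d)) (int_span (2 * d) pair_roots)"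
proof -
  let ?L = "int_span (2 * d) pair_roots"
  let ?E = "{S. S \<subseteq> {..<d} \<and> even (card S)}"
  let ?g = "\<lambda>S. indicator ((*) 2 ` S) :: nat \<Rightarrow> int"
  have inj: "inj ((*) (2::nat))" by (simp add: inj_on_def)
  have L: "?L = lattice_of (pair_roots ` {..<2 * d})"
    using int_span_eq_lattice_of lin_indep_inj lin_indep_pair_roots by blast
  have "?g S \<in> Dn (2 * d)" if "S \<in> ?E" for S
  proof -
    have "(*) 2 ` S \<subseteq> {..<2 * d}" using that by auto
    then show ?thesis
      using that indicator_in_Dn_iff card_image[OF inj_on_subset[OF inj]] by auto
  qed
  then have sub: "(\<lambda>S. (+) (?g S) ` ?L) ` ?E \<subseteq> (\<lambda>x. (+) x ` ?L) ` Dn (2 * d)" by blast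
  have inj_cosets: "inj_on (\<lambda>S. (+) (?g S) ` ?L) ?E"
  proof (rule inj_onI)
    fix S S' assume "(+) (?g S) ` ?L = (+) (?g S') ` ?L"
    then have "?g S - ?g S' \<in> ?L" unfolding L by (rule lattice_of_coset_eqD)
    then have pair_sum: "even ((?g S - ?g S') (2 * k) + (?g S - ?g S') (2 * k + 1))" for k
      by (rule int_span_pair_roots_even)
    have vals: "?g T (2 * k) = of_bool (k \<in> T)" "?g T (2 * k + 1) = 0" for T k
    proof -
      have "2 * k + 1 \<noteq> 2 * x" for x :: nat by presburger
      then show "?g T (2 * k) = of_bool (k \<in> T)" "?g T (2 * k + 1) = 0"
        by (auto simp: indicator_def)
    qed
    have parity: "even (of_bool (k \<in> S) - of_bool (k \<in> S') :: int)" for k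
      using pair_sum[of k] by (simp only: minus_apply vals add_0_right diff_zero)
    have "k \<in> S \<longleftrightarrow> k \<in> S'" for k
      using parity[of k] by (cases "k \<in> S"; cases "k \<in> S'") auto
    then show "S = S'" by blast
  qed
  have "finite ((\<lambda>x. (+) x ` ?L) ` Dn (2 * d))"
    using lattice_index_root_sublattice_le(1) pair_roots_in_Dn_roots lin_indep_pair_roots by blast
  from card_inj_on_le[OF inj_cosets sub this]
  have "card ?E \<le> card ((\<lambda>x. (+) x ` ?L) ` Dn (2 * d))" .
  then show ?thesis by (simp add: lattice_index_eq_card_cosets)
qed

theorem proposition15p2:
  fixes d :: nat
  assumes "d \<ge> 1"
  defines "S \<equiv> {lattice_index (Dn (2*d)) (int_span (2*d) r) | r.
                 (\<forall>i<2*d. r i \<in> Dn_roots (2*d)) \<and> lin_indep (2*d) r}"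
  shows "(2::nat)^(d-1) \<in> S \<and> (\<forall>k\<in>S. k \<le> 2^(d-1))"
proof
  have upper: "lattice_index (Dn (2*d)) (int_span (2*d) r) \<le> 2^(d-1)"
    if "\<forall>i<2*d. r i \<in> Dn_roots (2*d)" "lin_indep (2*d) r" for r
    using lattice_index_root_sublattice_le(2)[OF that] by simp
  then show "\<forall>k\<in>S. k \<le> 2^(d-1)" unfolding S_def by blast
  have roots: "\<forall>i<2*d. pair_roots i \<in> Dn_roots (2*d)" using pair_roots_in_Dn_roots by blast
  have "card {S. S \<subseteq> {..<d} \<and> even (card S)} = 2^(d-1)"
    using card_even_subsets[of "{..<d}"] assms by (simp add: lessThan_empty_iff)
  then have "2^(d-1) \<le> lattice_index (Dn (2*d)) (int_span (2*d) pair_roots)"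
    using card_even_subsets_le_lattice_index[of d] by simp
  moreover have "lattice_index (Dn (2*d)) (int_span (2*d) pair_roots) \<le> 2^(d-1)"
    by (rule upper[OF roots lin_indep_pair_roots])
  ultimately have "(2::nat)^(d-1) = lattice_index (Dn (2*d)) (int_span (2*d) pair_roots)"
    by (rule antisym)
  then show "(2::nat)^(d-1) \<in> S"
    unfolding S_def using roots lin_indep_pair_roots by blast
qed

end
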